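(* A weighted pushdown system $\mathcal{A}$ has a good cycle (reachable from the initial configuration) if and only if its summary graph $\mathrm{Gr}(\mathcal{A})$ has a positive simple cycle (reachable from $(q_0,\bot)$).
   Context: A weighted pushdown system (WPS) is $\mathcal{A}=\langle Q,\Gamma,q_0,E,w\rangle$ with finite states $Q$, finite stack alphabet $\Gamma\ni\bot$ ($\bot$ never pushed or popped), edges $E\subseteq(Q\times\Gamma)\times(Q\times\mathrm{Com}(\Gamma))$, $\mathrm{Com}(\Gamma)=\{\mathit{skip},\mathit{pop}\}\cup\{\mathit{push}(z)\}$, weights $w:E\to\mathbb{Z}$; initial configuration $(\bot,q_0)$. Configurations $(\alpha,q)$, $\alpha\in\Gamma^+$; successor via an edge $(q,\mathrm{Top}(\alpha),q',\mathit{com})$ yields $(\mathit{com}(\alpha),q')$. A configuration $(\alpha_i,q_i)$ in a path is a local minimum if $\alpha_i$ is a prefix of all later stacks in the path. A good cycle is a finite path $\langle(\alpha_1,q_1),\dots,(\alpha_n,q_n)\rangle$ of positive weight whose first configuration is a local minimum, with $q_1=q_n$ and $\mathrm{Top}(\alpha_1)=\mathrm{Top}(\alpha_n)$. A path from $(\alpha\gamma,q_1)$ is non-decreasing if its first configuration is a local minimum. The summary function $s(q_1,\gamma,q_2)$ equals $\omega$ if non-decreasing paths from $(\bot\gamma,q_1)$ to $(\bot\gamma,q_2)$ of arbitrarily large weight exist, else the maximum weight of such a path, and $-\infty$ if none exists. The summary graph $\mathrm{Gr}(\mathcal{A})$ has vertices $Q\times\Gamma$ and edges: $((q_1,\gamma),(q_2,\gamma))$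 with weight $s(q_1,\gamma,q_2)$ whenever $s(q_1,\gamma,q_2)>-\infty$, and $((q_1,\gamma_1),(q_2,\gamma_2))$ with weight $w(e)$ for every edge $e=(q_1,\gamma_1,q_2,\mathit{push}(\gamma_2))\in E$. A simple cycle of $\mathrm{Gr}(\mathcal{A})$ is positive if it contains an edge of weight $\omega$ or its total weight is positive. *)

theory Defs
  imports Main "HOL-Library.Extended_Real" "HOL-Library.Sublist"
begin

datatype 'g com = Skip | Pop | Push 'g

text \<open>An edge (q1, gamma, q2, com): in state q1 with top-of-stack gamma, go to q2 and
  perform com.  States are a finite type 'q, the stack alphabet a finite type 'g.\<close>
type_synonym ('q,'g) edge = "'q \<times> 'g \<times> 'q \<times> 'g com"

text \<open>A configuration (alpha, q); the stack alpha is a list written bottom first,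
  so the top of the stack is the last element.\<close>
type_synonym ('q,'g) config = "'g list \<times> 'q"

definition stack_top :: "'g list \<Rightarrow> 'g" where
  "stack_top \<alpha> = last \<alpha>"

fun apply_com :: "'g com \<Rightarrow> 'g list \<Rightarrow> 'g list" where
  "apply_com Skip \<alpha> = \<alpha>"
| "apply_com Pop \<alpha> = butlast \<alpha>"
| "apply_com (Push z) \<alpha> = \<alpha> @ [z]"

definition wf_wps :: "'g \<Rightarrow> ('q,'g) edge set \<Rightarrow> bool" where
  "wf_wps bt E \<longleftrightarrow> finite E \<and>
     (\<forall>q1 \<gamma> q2 c. (q1, \<gamma>, q2, c) \<in> E \<longrightarrow> (c = Pop \<longrightarrow> \<gamma> \<noteq> bt) \<and> c \<noteq> Push bt)"

definition step :: "('q,'g) edge set \<Rightarrow> ('q,'g) config \<Rightarrow> ('q,'g) edge \<Rightarrow> ('q,'g) config \<Rightarrow> bool" where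
  "step E c e c' \<longleftrightarrow> e \<in> E \<and>
     (case e of (q1, \<gamma>, q2, cm) \<Rightarrow>
        snd c = q1 \<and> stack_top (fst c) = \<gamma> \<and> c' = (apply_com cm (fst c), q2))"

definition is_path :: "('q,'g) edge set \<Rightarrow> ('q,'g) config list \<Rightarrow> ('q,'g) edge list \<Rightarrow> bool" where
  "is_path E cs es \<longleftrightarrow> length cs = Suc (length es) \<and>
     (\<forall>i < length es. step E (cs ! i) (es ! i) (cs ! Suc i))"

definition path_weight :: "(('q,'g) edge \<Rightarrow> int) \<Rightarrow> ('q,'g) edge list \<Rightarrow> int" where
  "path_weight w es = sum_list (map w es)"

definition is_local_min :: "('q,'g) config list \<Rightarrow> nat \<Rightarrow> bool" where
  "is_local_min cs i \<longleftrightarrow> (\<forall>j. i \<le> j \<and> j < length cs \<longrightarrow> prefix (fst (cs ! i)) (fst (cs ! j)))"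

definition good_cycle :: "('q,'g) edge set \<Rightarrow> (('q,'g) edge \<Rightarrow> int) \<Rightarrow>
    ('q,'g) config list \<Rightarrow> ('q,'g) edge list \<Rightarrow> bool" where
  "good_cycle E w cs es \<longleftrightarrow> is_path E cs es \<and> path_weight w es > 0 \<and> is_local_min cs 0 \<and>
     snd (hd cs) = snd (last cs) \<and> stack_top (fst (hd cs)) = stack_top (fst (last cs))"

definition has_reachable_good_cycle :: "'g \<Rightarrow> 'q \<Rightarrow> ('q,'g) edge set \<Rightarrow> (('q,'g) edge \<Rightarrow> int) \<Rightarrow> bool" where
  "has_reachable_good_cycle bt q0 E w \<longleftrightarrow>
     (\<exists>cs0 es0 cs es. is_path E cs0 es0 \<and> hd cs0 = ([bt], q0) \<and>
        good_cycle E w cs es \<and> hd cs = last cs0)"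

definition base_stack :: "'g \<Rightarrow> 'g \<Rightarrow> 'g list" where
  "base_stack bt \<gamma> = (if \<gamma> = bt then [bt] else [bt, \<gamma>])"

definition nondecr_weights :: "'g \<Rightarrow> ('q,'g) edge set \<Rightarrow> (('q,'g) edge \<Rightarrow> int) \<Rightarrow>
    'q \<Rightarrow> 'g \<Rightarrow> 'q \<Rightarrow> int set" where
  "nondecr_weights bt E w q1 \<gamma> q2 =
     {path_weight w es | cs es. is_path E cs es \<and> is_local_min cs 0 \<and>
        hd cs = (base_stack bt \<gamma>, q1) \<and> last cs = (base_stack bt \<gamma>, q2)}"

definition summary :: "'g \<Rightarrow> ('q,'g) edge set \<Rightarrow> (('q,'g) edge \<Rightarrow> int) \<Rightarrow>
    'q \<Rightarrow> 'g \<Rightarrow> 'q \<Rightarrow> ereal" where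
  "summary bt E w q1 \<gamma> q2 =
     (let W = nondecr_weights bt E w q1 \<gamma> q2 in
      if W = {} then -\<infinity>
      else if \<not> bdd_above W then \<infinity>
      else ereal (real_of_int (GREATEST x. x \<in> W)))"

datatype ('q,'g) gedge = SumE 'q 'g 'q | PushE "('q,'g) edge"

fun gsrc :: "('q,'g) gedge \<Rightarrow> 'q \<times> 'g" where
  "gsrc (SumE q1 \<gamma> q2) = (q1, \<gamma>)"
| "gsrc (PushE (q1, \<gamma>1, q2, c)) = (q1, \<gamma>1)"

fun gtgt :: "('q,'g) gedge \<Rightarrow> 'q \<times> 'g" where
  "gtgt (SumE q1 \<gamma> q2) = (q2, \<gamma>)"
| "gtgt (PushE (q1, \<gamma>1, q2, Push \<gamma>2)) = (q2, \<gamma>2)"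
| "gtgt (PushE (q1, \<gamma>1, q2, c)) = (q2, \<gamma>1)" \<comment> \<open>irrelevant: only push edges occur\<close>

fun gweight :: "'g \<Rightarrow> ('q,'g) edge set \<Rightarrow> (('q,'g) edge \<Rightarrow> int) \<Rightarrow> ('q,'g) gedge \<Rightarrow> ereal" where
  "gweight bt E w (SumE q1 \<gamma> q2) = summary bt E w q1 \<gamma> q2"
| "gweight bt E w (PushE e) = ereal (real_of_int (w e))"

definition summary_graph :: "'g \<Rightarrow> ('q,'g) edge set \<Rightarrow> (('q,'g) edge \<Rightarrow> int) \<Rightarrow> ('q,'g) gedge set" where
  "summary_graph bt E w =
     {SumE q1 \<gamma> q2 | q1 \<gamma> q2. summary bt E w q1 \<gamma> q2 > -\<infinity>}
     \<union> {PushE (q1, \<gamma>1, q2, Push \<gamma>2) | q1 \<gamma>1 q2 \<gamma>2. (q1, \<gamma>1, q2, Push \<gamma>2) \<in> E}"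

definition is_simple_cycle :: "('q,'g) gedge set \<Rightarrow> ('q,'g) gedge list \<Rightarrow> bool" where
  "is_simple_cycle G gs \<longleftrightarrow> gs \<noteq> [] \<and> set gs \<subseteq> G \<and>
     (\<forall>i. Suc i < length gs \<longrightarrow> gtgt (gs ! i) = gsrc (gs ! Suc i)) \<and>
     gtgt (last gs) = gsrc (hd gs) \<and> distinct (map gsrc gs)"

definition positive_cycle :: "(('q,'g) gedge \<Rightarrow> ereal) \<Rightarrow> ('q,'g) gedge list \<Rightarrow> bool" where
  "positive_cycle wt gs \<longleftrightarrow> (\<exists>g \<in> set gs. wt g = \<infinity>) \<or> sum_list (map wt gs) > 0"

definition graph_rel :: "('q,'g) gedge set \<Rightarrow> (('q \<times> 'g) \<times> ('q \<times> 'g)) set" where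
  "graph_rel G = {(gsrc g, gtgt g) | g. g \<in> G}"

definition has_reachable_positive_simple_cycle :: "'g \<Rightarrow> 'q \<Rightarrow> ('q,'g) edge set \<Rightarrow> (('q,'g) edge \<Rightarrow> int) \<Rightarrow> bool" where
  "has_reachable_positive_simple_cycle bt q0 E w \<longleftrightarrow>
     (\<exists>gs. is_simple_cycle (summary_graph bt E w) gs \<and>
        positive_cycle (gweight bt E w) gs \<and>
        ((q0, bt), gsrc (hd gs)) \<in> (graph_rel (summary_graph bt E w))\<^sup>*)"

end

theory Submission
  imports Defs
begin

(* A run whose first stack alpha is a prefix of every later stack
   ("a run above alpha") only ever inspects the top symbol of alpha, so it can be
   transplanted onto any other stack with the same top; in particular the weights of
   such runs from (alpha, q1) back to (alpha, q2) are exactly the summary weights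
   s(q1, last alpha, q2).  Cutting a run above alpha at the LAST return to the stack
   alpha splits it into a summary part and, if it continues, a push edge followed by a
   run above alpha @ [z]; by induction every run above alpha projects to a walk of the
   summary graph whose weight dominates the run's weight.  Conversely every walk of the
   summary graph can be realised by runs above a given stack whose weights reach the
   walk's weight (or any prescribed bound, if the walk contains an omega edge).
   A positive closed walk decomposes into simple cycles, one of which is positive. *)

text \<open>A recursive characterisation of paths, convenient for induction.\<close>
fun run :: "('q,'g) edge set \<Rightarrow> ('q,'g) config list \<Rightarrow> ('q,'g) edge list \<Rightarrow> bool" where
  "run E [c] [] = True"
| "run E (c # c' # cs) (e # es) = (step E c e c' \<and> run E (c' # cs) es)"
| "run E _ _ = False"

lemma is_path_iff_run: "is_path E cs es \<longleftrightarrow> run E cs es"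
proof (induction E cs es rule: run.induct)
  case (2 E c c' cs e es)
  show ?case
    by (simp add: 2[symmetric] is_path_def All_less_Suc2) blast
qed (auto simp: is_path_def)

lemma run_nonempty: "run E cs es \<Longrightarrow> cs \<noteq> []"
  by (cases cs) auto

lemma run_append:
  "run E (xs @ [c]) es1 \<Longrightarrow> run E (c # ys) es2 \<Longrightarrow> run E (xs @ c # ys) (es1 @ es2)"
proof (induction xs arbitrary: es1)
  case Nil
  then show ?case by (cases es1) auto
next
  case (Cons a xs)
  then show ?case by (cases xs; cases es1) auto
qed

lemma run_concat:
  assumes "run E cs1 es1" "run E cs2 es2" "last cs1 = hd cs2"
  shows "run E (butlast cs1 @ cs2) (es1 @ es2)"
    and "hd (butlast cs1 @ cs2) = hd cs1" "last (butlast cs1 @ cs2) = last cs2"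
proof -
  obtain xs c where cs1: "cs1 = xs @ [c]"
    using run_nonempty[OF assms(1)] by (metis append_butlast_last_id)
  obtain ys where cs2: "cs2 = c # ys"
    using run_nonempty[OF assms(2)] assms(3) cs1 by (metis last_snoc list.collapse)
  show "run E (butlast cs1 @ cs2) (es1 @ es2)"
    using run_append assms(1,2) cs1 cs2 by fastforce
  show "hd (butlast cs1 @ cs2) = hd cs1" "last (butlast cs1 @ cs2) = last cs2"
    using cs1 cs2 by (cases xs; simp)+
qed

lemma run_split:
  "run E (xs @ c # ys) es \<Longrightarrow> \<exists>es1 es2. es = es1 @ es2 \<and> run E (xs @ [c]) es1 \<and> run E (c # ys) es2"
proof (induction xs arbitrary: es)
  case Nil
  then show ?case by (intro exI[of _ "[]"] exI[of _ es]) auto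
next
  case (Cons a xs)
  obtain e es' where es: "es = e # es'" using Cons.prems by (cases es; cases xs) auto
  show ?case
  proof (cases xs)
    case Nil
    then show ?thesis using Cons.prems es by (intro exI[of _ "[e]"] exI[of _ es']) auto
  next
    case (Cons x xs')
    have "run E (xs @ c # ys) es'" "step E a e x" using Cons.prems es \<open>xs = x # xs'\<close> by auto
    then obtain es1 es2 where "es' = es1 @ es2" "run E (xs @ [c]) es1" "run E (c # ys) es2"
      using Cons.IH by blast
    then show ?thesis using es \<open>step E a e x\<close> \<open>xs = x # xs'\<close>
      by (intro exI[of _ "e # es1"] exI[of _ es2]) auto
  qed
qed

lemma local_min_iff:
  "cs \<noteq> [] \<Longrightarrow> is_local_min cs 0 \<longleftrightarrow> (\<forall>c\<in>set cs. prefix (fst (hd cs)) (fst c))"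
  by (simp add: is_local_min_def hd_conv_nth all_set_conv_all_nth)

section \<open>Stack discipline\<close>

text \<open>A run above P never looks below the top of P, so it can be rebased onto any
  nonempty stack P' with the same top symbol.\<close>
definition rebase :: "'g list \<Rightarrow> 'g list \<Rightarrow> ('q,'g) config \<Rightarrow> ('q,'g) config" where
  "rebase P P' c = (P' @ drop (length P) (fst c), snd c)"

lemma run_rebase:
  assumes "run E cs es" "\<forall>c\<in>set cs. prefix P (fst c)" "P \<noteq> []" "P' \<noteq> []" "last P = last P'"
  shows "run E (map (rebase P P') cs) es"
  using assms
proof (induction E cs es rule: run.induct)
  case (2 E c c' cs e es)
  obtain q1 \<gamma> q2 cm where e: "e = (q1, \<gamma>, q2, cm)" by (cases e) auto
  obtain s where s: "fst c = P @ s" using 2(3) by (auto simp: prefix_def)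
  obtain s' where s': "fst c' = P @ s'" using 2(3) by (auto simp: prefix_def)
  have st: "step E c e c'" using 2 by simp
  have top: "stack_top (P' @ s) = stack_top (P @ s)"
    using 2(5,6) by (cases "s = []") (auto simp: stack_top_def)
  have "step E (rebase P P' c) e (rebase P P' c')"
  proof (cases cm)
    case Pop
    have "butlast (P @ s) = P @ s'" using st e s s' Pop by (auto simp: step_def)
    have "s \<noteq> []"
    proof
      assume "s = []"
      then have "length P - 1 = length P + length s'"
        using \<open>butlast (P @ s) = P @ s'\<close> by (metis append_Nil2 length_append length_butlast)
      then show False using \<open>P \<noteq> []\<close> by (cases P) simp_all
    qed
    then show ?thesis using st e s s' top Pop by (auto simp: step_def rebase_def butlast_append)
  qed (use st e s s' top in \<open>auto simp: step_def rebase_def\<close>)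
  then show ?case using 2 by simp
qed auto

lemma step_leaves_prefix:
  assumes "step E c e c'" "prefix \<alpha> (fst c)" "\<not> prefix \<alpha> (fst c')"
  shows "fst c = \<alpha> \<and> fst c' = butlast \<alpha> \<and> e = (snd c, last \<alpha>, snd c', Pop)"
proof -
  obtain s where s: "fst c = \<alpha> @ s" using assms(2) by (auto simp: prefix_def)
  obtain q1 \<gamma> q2 cm where e: "e = (q1, \<gamma>, q2, cm)" by (cases e)
  have c': "c' = (apply_com cm (fst c), q2)" and q1: "q1 = snd c" and \<gamma>: "\<gamma> = last (fst c)"
    using assms(1) e by (auto simp: step_def stack_top_def)
  have cm: "cm = Pop" using assms(3) c' s by (cases cm) auto
  have "s = []"
  proof (rule ccontr)
    assume "s \<noteq> []"
    then have "prefix \<alpha> (fst c')" using c' s cm by (simp add: butlast_append)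
    with assms(3) show False ..
  qed
  then show ?thesis using c' q1 \<gamma> s cm e by simp
qed

lemma run_stays_above:
  assumes "run E cs es" "prefix \<alpha> (fst (hd cs))"
    and "\<And>c e c'. step E c e c' \<Longrightarrow> c' \<in> set cs \<Longrightarrow> fst c = \<alpha> \<Longrightarrow> prefix \<alpha> (fst c')"
  shows "\<forall>c\<in>set cs. prefix \<alpha> (fst c)"
  using assms
proof (induction E cs es rule: run.induct)
  case (2 E c c' cs e es)
  have st: "step E c e c'" and above: "prefix \<alpha> (fst c)" using 2(2,3) by simp_all
  have "prefix \<alpha> (fst c')"
    using step_leaves_prefix[OF st above] 2(4)[OF st] by auto
  then have "\<forall>x\<in>set (c' # cs). prefix \<alpha> (fst x)"
    using 2 by simp
  then show ?case using 2(3) by simp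
qed auto

lemma run_keeps_bottom:
  assumes "wf_wps bt E" "run E cs es" "hd cs = ([bt], q0)"
  shows "\<forall>c\<in>set cs. prefix [bt] (fst c)"
proof (rule run_stays_above[OF assms(2)])
  fix c e c' assume st: "step E c e c'" and "fst c = [bt]"
  show "prefix [bt] (fst c')"
  proof (rule ccontr)
    assume "\<not> prefix [bt] (fst c')"
    then have "e = (snd c, bt, snd c', Pop)"
      using step_leaves_prefix[OF st, of "[bt]"] \<open>fst c = [bt]\<close> by auto
    moreover have "e \<in> E" using st by (simp add: step_def)
    ultimately show False using assms(1) unfolding wf_wps_def by blast
  qed
qed (simp add: assms(3))

lemma excursion_starts_with_push:
  assumes "run E ((P, q) # y # ys) es" "\<forall>c\<in>set (y # ys). prefix P (fst c) \<and> fst c \<noteq> P"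
    and "P \<noteq> []"
  obtains e z es' where "es = e # es'" "e = (q, last P, snd y, Push z)" "e \<in> E"
    "run E (y # ys) es'" "\<forall>c\<in>set (y # ys). prefix (P @ [z]) (fst c)"
proof -
  obtain e es' where es: "es = e # es'" and st: "step E (P, q) e y" and r: "run E (y # ys) es'"
    using assms(1) by (cases es) auto
  obtain q1 \<gamma> q2 cm where e: "e = (q1, \<gamma>, q2, cm)" by (cases e)
  have y: "y = (apply_com cm P, q2)" and e': "e = (q, last P, snd y, cm)" "e \<in> E"
    using st e by (auto simp: step_def stack_top_def)
  obtain z where cm: "cm = Push z"
  proof (cases cm)
    case Skip
    then show ?thesis using y assms(2) by simp
  next
    case Pop
    then have "prefix P (butlast P)" using y assms(2) by simp
    then have "length P \<le> length P - 1" by (metis prefix_length_le length_butlast)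
    then show ?thesis using assms(3) by (cases P) simp_all
  qed
  have "\<forall>c\<in>set (y # ys). prefix (P @ [z]) (fst c)"
  proof (rule run_stays_above[OF r])
    fix c e c' assume "step E c e c'" "c' \<in> set (y # ys)" "fst c = P @ [z]"
    then show "prefix (P @ [z]) (fst c')"
      using step_leaves_prefix[of E c e c' "P @ [z]"] assms(2) by fastforce
  qed (simp add: y cm)
  then show thesis using that es e' cm r by simp
qed

section \<open>Runs above a stack\<close>

text \<open>Good cycles and summaries are both phrased through this notion.\<close>
definition run_above :: "('q,'g) edge set \<Rightarrow> (('q,'g) edge \<Rightarrow> int) \<Rightarrow>
    'g list \<Rightarrow> 'q \<Rightarrow> 'g list \<Rightarrow> 'q \<Rightarrow> int \<Rightarrow> bool" where
  "run_above E w \<alpha> q \<alpha>' q' x \<longleftrightarrow> (\<exists>cs es. run E cs es \<and> hd cs = (\<alpha>, q) \<and> last cs = (\<alpha>', q') \<and>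
     (\<forall>c\<in>set cs. prefix \<alpha> (fst c)) \<and> path_weight w es = x)"

lemma path_weight_append: "path_weight w (xs @ ys) = path_weight w xs + path_weight w ys"
  by (simp add: path_weight_def)

lemma run_above_prefix: "run_above E w \<alpha> q \<alpha>' q' x \<Longrightarrow> prefix \<alpha> \<alpha>'"
  unfolding run_above_def by (metis fst_conv last_in_set run_nonempty)

lemma run_above_refl: "run_above E w \<alpha> q \<alpha> q 0"
  unfolding run_above_def
  by (intro exI[of _ "[(\<alpha>, q)]"] exI[of _ "[]"]) (simp add: path_weight_def)

lemma run_above_trans:
  assumes "run_above E w \<alpha> q \<beta> p x" "run_above E w \<beta> p \<gamma> r y" "prefix \<alpha> \<beta>"
  shows "run_above E w \<alpha> q \<gamma> r (x + y)"
proof -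
  obtain cs1 es1 where 1: "run E cs1 es1" "hd cs1 = (\<alpha>, q)" "last cs1 = (\<beta>, p)"
    "\<forall>c\<in>set cs1. prefix \<alpha> (fst c)" "path_weight w es1 = x"
    using assms(1) unfolding run_above_def by blast
  obtain cs2 es2 where 2: "run E cs2 es2" "hd cs2 = (\<beta>, p)" "last cs2 = (\<gamma>, r)"
    "\<forall>c\<in>set cs2. prefix \<beta> (fst c)" "path_weight w es2 = y"
    using assms(2) unfolding run_above_def by blast
  have glue: "last cs1 = hd cs2" using 1(3) 2(2) by simp
  have "\<forall>c\<in>set (butlast cs1 @ cs2). prefix \<alpha> (fst c)"
    using 1(4) 2(4) assms(3) by (auto dest: in_set_butlastD intro: prefix_order.trans)
  then show ?thesis unfolding run_above_def
    using run_concat[OF 1(1) 2(1) glue] 1(2,5) 2(3,5)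
    by (intro exI[of _ "butlast cs1 @ cs2"] exI[of _ "es1 @ es2"]) (simp add: path_weight_append)
qed

lemma run_above_push:
  assumes "(q, last \<alpha>, q', Push z) \<in> E"
  shows "run_above E w \<alpha> q (\<alpha> @ [z]) q' (w (q, last \<alpha>, q', Push z))"
  unfolding run_above_def
  by (intro exI[of _ "[(\<alpha>, q), (\<alpha> @ [z], q')]"] exI[of _ "[(q, last \<alpha>, q', Push z)]"])
    (use assms in \<open>simp add: step_def stack_top_def path_weight_def\<close>)

lemma run_last_return:
  assumes "run E cs es" "hd cs = (P, q)" "\<forall>c\<in>set cs. prefix P (fst c)"
  obtains q1 ys es1 es2 where "es = es1 @ es2" "run_above E w P q P q1 (path_weight w es1)"
    "run E ((P, q1) # ys) es2" "last ((P, q1) # ys) = last cs" "length ys < length cs"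
    "\<forall>y\<in>set ys. prefix P (fst y) \<and> fst y \<noteq> P"
proof -
  have "\<exists>c\<in>set cs. fst c = P" using assms(1,2) run_nonempty by (metis fst_conv list.set_sel(1))
  then obtain xs c ys where cs: "cs = xs @ c # ys" and cP: "fst c = P" and ys: "\<forall>y\<in>set ys. fst y \<noteq> P"
    using split_list_last_prop[of cs "\<lambda>c. fst c = P"] by blast
  obtain q1 where c: "c = (P, q1)" using cP by (cases c) simp
  obtain es1 es2 where es: "es = es1 @ es2" "run E (xs @ [c]) es1" "run E (c # ys) es2"
    using run_split assms(1) cs by blast
  have "hd (xs @ [c]) = (P, q)" using assms(2) cs by (cases xs) auto
  then have "run_above E w P q P q1 (path_weight w es1)"
    unfolding run_above_def using es(2) assms(3) cs c
    by (intro exI[of _ "xs @ [c]"] exI[of _ es1]) auto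
  then show thesis using that[of es1 es2 q1 ys] es(1,3) c cs ys assms(3) by auto
qed

section \<open>The summary function\<close>

lemma int_greatest:
  fixes W :: "int set"
  assumes "W \<noteq> {}" "bdd_above W"
  shows "(GREATEST x. x \<in> W) \<in> W" "\<And>y. y \<in> W \<Longrightarrow> y \<le> (GREATEST x. x \<in> W)"
proof -
  obtain x0 where x0: "x0 \<in> W" using assms by auto
  obtain B where B: "\<forall>y\<in>W. y \<le> B" using assms(2) by (auto simp: bdd_above_def)
  define M where "M = Max (W \<inter> {x0..B})"
  have fin: "finite (W \<inter> {x0..B})" by simp
  have "x0 \<in> W \<inter> {x0..B}" using x0 B by auto
  then have M_in: "M \<in> W" using Max_in[OF fin] unfolding M_def by blast
  have x0_le: "x0 \<le> M" using Max_ge[OF fin \<open>x0 \<in> W \<inter> {x0..B}\<close>] unfolding M_def .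
  have M_ge: "y \<le> M" if "y \<in> W" for y
  proof (cases "x0 \<le> y")
    case True
    then show ?thesis using Max_ge[OF fin, of y] that B unfolding M_def by auto
  qed (use x0_le in simp)
  have "(GREATEST x. x \<in> W) = M"
    by (rule Greatest_equality) (use M_in M_ge in auto)
  then show "(GREATEST x. x \<in> W) \<in> W" "\<And>y. y \<in> W \<Longrightarrow> y \<le> (GREATEST x. x \<in> W)"
    using M_in M_ge by auto
qed

lemma summary_ge:
  "x \<in> nondecr_weights bt E w q1 \<gamma> q2 \<Longrightarrow> ereal (real_of_int x) \<le> summary bt E w q1 \<gamma> q2"
  using int_greatest[of "nondecr_weights bt E w q1 \<gamma> q2"]
  by (auto simp: summary_def Let_def)

lemma summary_infinite:
  "summary bt E w q1 \<gamma> q2 = \<infinity> \<Longrightarrow> \<exists>x\<in>nondecr_weights bt E w q1 \<gamma> q2. N \<le> x"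
  unfolding summary_def Let_def bdd_above_def
  by (auto split: if_splits) (meson linorder_le_cases)

lemma summary_finite:
  "summary bt E w q1 \<gamma> q2 = ereal r \<Longrightarrow> \<exists>x\<in>nondecr_weights bt E w q1 \<gamma> q2. r = real_of_int x"
  using int_greatest[of "nondecr_weights bt E w q1 \<gamma> q2"]
  by (auto simp: summary_def Let_def split: if_splits)

lemma base_stack_nonempty: "base_stack bt \<gamma> \<noteq> []"
  and last_base_stack: "last (base_stack bt \<gamma>) = \<gamma>"
  by (auto simp: base_stack_def)

text \<open>Summaries do not depend on the stack below the top: runs above alpha from
  (alpha, q1) back to (alpha, q2) weigh at most s(q1, last alpha, q2) ...\<close>
lemma return_weight_le_summary:
  assumes "run_above E w \<alpha> q1 \<alpha> q2 x" "\<alpha> \<noteq> []"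
  shows "ereal (real_of_int x) \<le> summary bt E w q1 (last \<alpha>) q2"
proof -
  obtain cs es where r: "run E cs es" "hd cs = (\<alpha>, q1)" "last cs = (\<alpha>, q2)"
    "\<forall>c\<in>set cs. prefix \<alpha> (fst c)" "path_weight w es = x"
    using assms(1) unfolding run_above_def by blast
  let ?B = "base_stack bt (last \<alpha>)"
  let ?cs = "map (rebase \<alpha> ?B) cs"
  have "run E ?cs es"
    by (rule run_rebase[OF r(1,4) assms(2)]) (simp_all add: base_stack_nonempty last_base_stack)
  moreover have "hd ?cs = (?B, q1)" "last ?cs = (?B, q2)"
    using r(2,3) run_nonempty[OF r(1)] by (simp_all add: rebase_def hd_map last_map)
  moreover have "is_local_min ?cs 0"
    using run_nonempty[OF r(1)] \<open>hd ?cs = (?B, q1)\<close> by (simp add: local_min_iff rebase_def)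
  ultimately have "x \<in> nondecr_weights bt E w q1 (last \<alpha>) q2"
    unfolding nondecr_weights_def is_path_iff_run using r(5) by blast
  then show ?thesis by (rule summary_ge)
qed

lemma summary_weight_realised:
  assumes "x \<in> nondecr_weights bt E w q1 \<gamma> q2" "\<alpha> \<noteq> []" "last \<alpha> = \<gamma>"
  shows "run_above E w \<alpha> q1 \<alpha> q2 x"
proof -
  let ?B = "base_stack bt \<gamma>"
  obtain cs es where r: "run E cs es" "is_local_min cs 0"
    "hd cs = (?B, q1)" "last cs = (?B, q2)" "path_weight w es = x"
    using assms(1) unfolding nondecr_weights_def is_path_iff_run by blast
  have ne: "cs \<noteq> []" using run_nonempty[OF r(1)] .
  have "run E (map (rebase ?B \<alpha>) cs) es"
    by (rule run_rebase[OF r(1)])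
      (use r(2,3) ne assms(2,3) in \<open>simp_all add: local_min_iff base_stack_nonempty last_base_stack\<close>)
  then show ?thesis unfolding run_above_def using r(3,4,5) ne
    by (intro exI[of _ "map (rebase ?B \<alpha>) cs"] exI[of _ es])
      (simp add: rebase_def hd_map last_map)
qed

section \<open>Walks in the summary graph\<close>

lemma summary_edge_in_graph:
  "SumE q1 \<gamma> q2 \<in> summary_graph bt E w \<longleftrightarrow> summary bt E w q1 \<gamma> q2 > -\<infinity>"
  by (auto simp: summary_graph_def)

lemma push_edge_in_graph:
  "PushE e \<in> summary_graph bt E w \<longleftrightarrow> (\<exists>q1 \<gamma> q2 z. e = (q1, \<gamma>, q2, Push z) \<and> e \<in> E)"
  by (auto simp: summary_graph_def)

fun walk :: "'q \<times> 'g \<Rightarrow> ('q,'g) gedge list \<Rightarrow> 'q \<times> 'g \<Rightarrow> bool" where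
  "walk u [] v = (u = v)"
| "walk u (g # gs) v = (gsrc g = u \<and> walk (gtgt g) gs v)"

lemma walk_append: "walk u (xs @ ys) v \<longleftrightarrow> (\<exists>x. walk u xs x \<and> walk x ys v)"
  by (induction xs arbitrary: u) auto

lemma chain_Cons:
  "(\<forall>i. Suc i < length (g # h # hs) \<longrightarrow> f ((g # h # hs) ! i) = k ((g # h # hs) ! Suc i)) \<longleftrightarrow>
   f g = k h \<and> (\<forall>i. Suc i < length (h # hs) \<longrightarrow> f ((h # hs) ! i) = k ((h # hs) ! Suc i))"
  by (auto simp: less_Suc_eq_0_disj)

lemma walk_iff_chain:
  "gs \<noteq> [] \<Longrightarrow> walk u gs v \<longleftrightarrow> gsrc (hd gs) = u \<and> gtgt (last gs) = v \<and>
     (\<forall>i. Suc i < length gs \<longrightarrow> gtgt (gs ! i) = gsrc (gs ! Suc i))"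
proof (induction gs arbitrary: u)
  case (Cons g gs)
  show ?case
  proof (cases gs)
    case (Cons h hs)
    have IH: "walk (gtgt g) (h # hs) v \<longleftrightarrow> gsrc h = gtgt g \<and> gtgt (last (h # hs)) = v \<and>
        (\<forall>i. Suc i < length (h # hs) \<longrightarrow> gtgt ((h # hs) ! i) = gsrc ((h # hs) ! Suc i))"
      using Cons.IH[of "gtgt g"] unfolding Cons by (simp only: list.sel list.distinct simp_thms)
    have "walk u (g # h # hs) v \<longleftrightarrow> gsrc g = u \<and> walk (gtgt g) (h # hs) v"
      by (rule walk.simps(2))
    then show ?thesis unfolding Cons chain_Cons IH
      by (simp only: list.sel last.simps list.distinct if_False) metis
  qed simp
qed simp

lemma simple_cycle_iff_walk:
  "is_simple_cycle G gs \<longleftrightarrow> gs \<noteq> [] \<and> set gs \<subseteq> G \<and>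
     walk (gsrc (hd gs)) gs (gsrc (hd gs)) \<and> distinct (map gsrc gs)"
proof (cases "gs = []")
  case False
  then show ?thesis
    using walk_iff_chain[OF False, of "gsrc (hd gs)" "gsrc (hd gs)"]
    by (auto simp: is_simple_cycle_def)
qed (simp add: is_simple_cycle_def)

lemma walk_reachable:
  "walk u gs v \<Longrightarrow> set gs \<subseteq> G \<Longrightarrow>
     (u, v) \<in> (graph_rel G)\<^sup>* \<and> (\<forall>g\<in>set gs. (u, gsrc g) \<in> (graph_rel G)\<^sup>*)"
proof (induction gs arbitrary: u)
  case (Cons g gs)
  have "(u, gtgt g) \<in> graph_rel G" using Cons.prems by (auto simp: graph_rel_def)
  then show ?case using Cons.IH[of "gtgt g"] Cons.prems
    by (auto intro: converse_rtrancl_into_rtrancl)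
qed simp

lemma reachable_imp_walk:
  "(u, v) \<in> (graph_rel G)\<^sup>* \<Longrightarrow> \<exists>gs. set gs \<subseteq> G \<and> walk u gs v"
proof (induction rule: rtrancl_induct)
  case base
  show ?case by (intro exI[of _ "[]"]) simp
next
  case (step v v')
  then obtain gs g where gs: "set gs \<subseteq> G" "walk u gs v"
    and g: "g \<in> G" "gsrc g = v" "gtgt g = v'"
    by (auto simp: graph_rel_def)
  have "walk v [g] v'" using g by simp
  then have "walk u (gs @ [g]) v'" using gs(2) walk_append by blast
  then show ?case using gs(1) g(1) by (intro exI[of _ "gs @ [g]"]) simp
qed

section \<open>Extracting a positive simple cycle\<close>

text \<open>For weights in ereal a cycle is positive iff its total weight is positive, since
  an omega edge makes the total weight omega.\<close>
lemma positive_cycle_iff_sum: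
  fixes wt :: "('q,'g) gedge \<Rightarrow> ereal"
  shows "positive_cycle wt gs \<longleftrightarrow> sum_list (map wt gs) > 0"
proof -
  have "sum_list (map wt gs) = \<infinity>" if "g \<in> set gs" "wt g = \<infinity>" for g
    using that by (induction gs) auto
  then show ?thesis unfolding positive_cycle_def by auto
qed

lemma not_distinct_map_decomp:
  "\<not> distinct (map f xs) \<Longrightarrow> \<exists>A x B y C. xs = A @ x # B @ y # C \<and> f x = f y"
proof (induction xs)
  case (Cons a xs)
  show ?case
  proof (cases "f a \<in> f ` set xs")
    case True
    then obtain y where y: "y \<in> set xs" "f y = f a" by auto
    then obtain B C where "xs = B @ y # C" by (meson split_list)
    then show ?thesis using y
      by (intro exI[of _ "[]"] exI[of _ a] exI[of _ B] exI[of _ y] exI[of _ C]) auto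
  next
    case False
    then obtain A x B y C where "xs = A @ x # B @ y # C" "f x = f y" using Cons by auto
    then show ?thesis by (intro exI[of _ "a # A"]) auto
  qed
qed simp

lemma closed_walk_split:
  fixes wt :: "('q,'g) gedge \<Rightarrow> 'a::comm_monoid_add"
  assumes "walk v gs v" "\<not> distinct (map gsrc gs)"
  obtains C1 C2 u where "walk u C1 u" "walk v C2 v"
    "length C1 < length gs" "length C2 < length gs" "set gs = set C1 \<union> set C2"
    "sum_list (map wt gs) = sum_list (map wt C1) + sum_list (map wt C2)"
proof -
  obtain A g1 B g2 C where gs: "gs = A @ g1 # B @ g2 # C" and eq: "gsrc g1 = gsrc g2"
    using not_distinct_map_decomp[OF assms(2)] by blast
  obtain u where wA: "walk v A u" and s1: "gsrc g1 = u" and wB: "walk (gtgt g1) B (gsrc g2)"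
    and wC: "walk (gtgt g2) C v"
    using assms(1) unfolding gs by (auto simp: walk_append)
  show thesis
  proof (rule that[of u "g1 # B" "A @ g2 # C"])
    have "walk u (g2 # C) v" using s1 eq wC by simp
    then show "walk v (A @ g2 # C) v" using wA walk_append by blast
  qed (use s1 eq wB in \<open>auto simp: gs ac_simps\<close>)
qed

lemma positive_closed_walk_contains_simple:
  fixes wt :: "('q,'g) gedge \<Rightarrow> 'a::{ordered_comm_monoid_add, linorder}"
  assumes "walk v gs v" "sum_list (map wt gs) > 0"
  shows "\<exists>cyc. cyc \<noteq> [] \<and> set cyc \<subseteq> set gs \<and> walk (gsrc (hd cyc)) cyc (gsrc (hd cyc)) \<and>
           distinct (map gsrc cyc) \<and> sum_list (map wt cyc) > 0"
  using assms
proof (induction "length gs" arbitrary: gs v rule: less_induct)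
  case less
  have "gs \<noteq> []" using less.prems(2) by auto
  show ?case
  proof (cases "distinct (map gsrc gs)")
    case True
    then show ?thesis using less.prems \<open>gs \<noteq> []\<close> walk_iff_chain[of gs v v] by auto
  next
    case False
    then obtain C1 C2 u where split: "walk u C1 u" "walk v C2 v"
      "length C1 < length gs" "length C2 < length gs" "set gs = set C1 \<union> set C2"
      "sum_list (map wt gs) = sum_list (map wt C1) + sum_list (map wt C2)"
      using closed_walk_split[OF less.prems(1)] by metis
    then have "sum_list (map wt C1) > 0 \<or> sum_list (map wt C2) > 0"
      using less.prems(2) add_nonpos_nonpos not_less by metis
    then show ?thesis
      using less.hyps[OF split(3,1)] less.hyps[OF split(4,2)] split(5) by blast
  qed
qed

section \<open>From runs to walks of the summary graph\<close>

text \<open>Projection: a run above P from (P, q) to (alpha', q') is dominated by a walk of the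
  summary graph from (q, last P) to (q', last alpha'): each return to the current base
  stack is a summary edge, each excursion starts with a push edge.\<close>
lemma run_above_projects:
  assumes "run_above E w P q \<alpha>' q' x" "P \<noteq> []"
  shows "\<exists>gs. set gs \<subseteq> summary_graph bt E w \<and> walk (q, last P) gs (q', last \<alpha>') \<and>
           ereal (real_of_int x) \<le> sum_list (map (gweight bt E w) gs)"
proof -
  obtain cs es where "run E cs es" "hd cs = (P, q)" "last cs = (\<alpha>', q')"
    "\<forall>c\<in>set cs. prefix P (fst c)" "path_weight w es = x"
    using assms(1) unfolding run_above_def by blast
  then show ?thesis using assms(2)
  proof (induction "length cs" arbitrary: cs es x P q rule: less_induct)
    case less
    obtain q1 ys es1 es2 where split: "es = es1 @ es2"
      "run_above E w P q P q1 (path_weight w es1)" "run E ((P, q1) # ys) es2"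
      "last ((P, q1) # ys) = last cs" "length ys < length cs"
      "\<forall>y\<in>set ys. prefix P (fst y) \<and> fst y \<noteq> P"
      using run_last_return[OF less.prems(1,2,4)] by metis
    have sum1: "ereal (real_of_int (path_weight w es1)) \<le> summary bt E w q (last P) q1"
      using return_weight_le_summary[OF split(2) less.prems(6)] .
    then have "-\<infinity> < summary bt E w q (last P) q1" by (rule less_le_trans[rotated]) simp
    then have g1: "SumE q (last P) q1 \<in> summary_graph bt E w" by (simp add: summary_edge_in_graph)
    show ?case
    proof (cases ys)
      case Nil
      then have "es2 = []" "\<alpha>' = P" "q' = q1" using split(3,4) less.prems(3) by (cases es2; simp)+
      then show ?thesis using g1 sum1 split(1) less.prems(5)
        by (intro exI[of _ "[SumE q (last P) q1]"]) simp
    next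
      case (Cons y ys')
      obtain e z es' where e: "es2 = e # es'" "e = (q1, last P, snd y, Push z)" "e \<in> E"
        and r: "run E (y # ys') es'" and above: "\<forall>c\<in>set (y # ys'). prefix (P @ [z]) (fst c)"
        using excursion_starts_with_push[OF split(3)[unfolded Cons]] split(6) Cons less.prems(6)
        by metis
      have hy: "hd (y # ys') = (P @ [z], snd y)"
        using split(3) e(1,2) Cons by (cases y) (simp add: step_def)
      obtain gs where gs: "set gs \<subseteq> summary_graph bt E w" "walk (snd y, z) gs (q', last \<alpha>')"
        "ereal (real_of_int (path_weight w es')) \<le> sum_list (map (gweight bt E w) gs)"
        using less.hyps[OF _ r hy _ above refl] split(4,5) less.prems(3) Cons by fastforce
      have "ereal (real_of_int x) = ereal (real_of_int (path_weight w es1)) +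
          (ereal (real_of_int (w e)) + ereal (real_of_int (path_weight w es')))"
        using split(1) e(1) less.prems(5) by (simp add: path_weight_def)
      also have "\<dots> \<le> summary bt E w q (last P) q1 +
          (ereal (real_of_int (w e)) + sum_list (map (gweight bt E w) gs))"
        by (intro add_mono order.refl sum1 gs(3))
      finally have "ereal (real_of_int x) \<le>
          sum_list (map (gweight bt E w) (SumE q (last P) q1 # PushE e # gs))"
        by simp
      moreover have "PushE e \<in> summary_graph bt E w" using e(2,3) by (simp add: push_edge_in_graph)
      moreover have "walk (q, last P) (SumE q (last P) q1 # PushE e # gs) (q', last \<alpha>')"
        using gs(2) e(2) by simp
      ultimately show ?thesis
        using g1 gs(1) by (intro exI[of _ "SumE q (last P) q1 # PushE e # gs"]) simp
    qed
  qed
qed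

section \<open>From walks of the summary graph to runs\<close>

text \<open>Lower bounds of the form min N (walk weight) compose along concatenation.\<close>
lemma min_ereal_shift:
  "min (ereal (real_of_int (N - x))) R \<le> ereal (real_of_int y) \<Longrightarrow>
   min (ereal (real_of_int N)) (ereal (real_of_int x) + R) \<le> ereal (real_of_int (x + y))"
  by (cases R) (auto simp: min_def split: if_splits)

text \<open>Realising a summary edge in front of a realisable walk: for a finite summary use a
  run of maximal weight, for omega a run heavy enough to exceed the required bound.\<close>
lemma summary_step_realised:
  assumes edge: "SumE q \<gamma> q2 \<in> summary_graph bt E w" and \<alpha>: "\<alpha> \<noteq> []" "last \<alpha> = \<gamma>"
    and rest: "\<And>M. \<exists>\<alpha>' y. run_above E w \<alpha> q2 \<alpha>' q' y \<and> last \<alpha>' = \<gamma>' \<and>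
                        min (ereal (real_of_int M)) R \<le> ereal (real_of_int y)"
  shows "\<exists>\<alpha>' x. run_above E w \<alpha> q \<alpha>' q' x \<and> last \<alpha>' = \<gamma>' \<and>
           min (ereal (real_of_int N)) (summary bt E w q \<gamma> q2 + R) \<le> ereal (real_of_int x)"
proof (cases "summary bt E w q \<gamma> q2")
  case (real r)
  then obtain x1 where x1: "x1 \<in> nondecr_weights bt E w q \<gamma> q2" "r = real_of_int x1"
    using summary_finite[OF real] by blast
  obtain \<alpha>' y where y: "run_above E w \<alpha> q2 \<alpha>' q' y" "last \<alpha>' = \<gamma>'"
    "min (ereal (real_of_int (N - x1))) R \<le> ereal (real_of_int y)"
    using rest by blast
  have "run_above E w \<alpha> q \<alpha>' q' (x1 + y)"
    using run_above_trans[OF summary_weight_realised[OF x1(1) \<alpha>] y(1)] by simp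
  then show ?thesis using y(2) min_ereal_shift[OF y(3)] real x1(2)
    by (intro exI[of _ \<alpha>'] exI[of _ "x1 + y"]) simp
next
  case PInf
  obtain \<alpha>' y where y: "run_above E w \<alpha> q2 \<alpha>' q' y" "last \<alpha>' = \<gamma>'"
    using rest by blast
  obtain x1 where x1: "x1 \<in> nondecr_weights bt E w q \<gamma> q2" "N - y \<le> x1"
    using summary_infinite[OF PInf] by blast
  have "run_above E w \<alpha> q \<alpha>' q' (x1 + y)"
    using run_above_trans[OF summary_weight_realised[OF x1(1) \<alpha>] y(1)] by simp
  moreover have "N \<le> x1 + y" using x1(2) by simp
  ultimately show ?thesis using y(2)
    by (intro exI[of _ \<alpha>'] exI[of _ "x1 + y"]) (simp add: min_le_iff_disj)
next
  case MInf
  then show ?thesis using edge by (simp add: summary_edge_in_graph)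
qed

lemma walk_realised:
  assumes "walk (q, \<gamma>) gs (q', \<gamma>')" "set gs \<subseteq> summary_graph bt E w" "\<alpha> \<noteq> []" "last \<alpha> = \<gamma>"
  shows "\<exists>\<alpha>' x. run_above E w \<alpha> q \<alpha>' q' x \<and> last \<alpha>' = \<gamma>' \<and>
           min (ereal (real_of_int N)) (sum_list (map (gweight bt E w) gs)) \<le> ereal (real_of_int x)"
  using assms
proof (induction gs arbitrary: q \<gamma> \<alpha> N)
  case Nil
  then show ?case using run_above_refl by (fastforce simp: min_le_iff_disj)
next
  case (Cons g gs)
  show ?case
  proof (cases g)
    case (SumE a b q2)
    then have "a = q" "b = \<gamma>" and wr: "walk (q2, \<gamma>) gs (q', \<gamma>')" using Cons.prems(1) by auto
    then show ?thesis
      using summary_step_realised[OF _ Cons.prems(3,4) Cons.IH[OF wr _ Cons.prems(3,4)]]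
        Cons.prems(2) SumE by simp
  next
    case (PushE e)
    then obtain z q2 where e: "e = (q, \<gamma>, q2, Push z)" "e \<in> E" and wr: "walk (q2, z) gs (q', \<gamma>')"
      using Cons.prems(1,2) by (auto simp: push_edge_in_graph)
    obtain \<alpha>' y where y: "run_above E w (\<alpha> @ [z]) q2 \<alpha>' q' y" "last \<alpha>' = \<gamma>'"
      "min (ereal (real_of_int (N - w e))) (sum_list (map (gweight bt E w) gs)) \<le> ereal (real_of_int y)"
      using Cons.IH[OF wr, of "\<alpha> @ [z]" "N - w e"] Cons.prems(2) by auto
    have "run_above E w \<alpha> q \<alpha>' q' (w e + y)"
      using run_above_trans[OF run_above_push y(1)] e Cons.prems(4) by simp
    then show ?thesis using y(2) min_ereal_shift[OF y(3)] PushE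
      by (intro exI[of _ \<alpha>'] exI[of _ "w e + y"]) simp
  qed
qed

text \<open>A reachable good cycle is a run above [bt] from the initial state to some (alpha, q),
  followed by a positive run above alpha from (alpha, q) back to state q with the same
  top symbol; the bottom symbol guarantees that every reachable run stays above [bt].\<close>
lemma reachable_good_cycle_iff:
  assumes "wf_wps bt E"
  shows "has_reachable_good_cycle bt q0 E w \<longleftrightarrow>
    (\<exists>\<alpha> q x \<alpha>' y. run_above E w [bt] q0 \<alpha> q x \<and> run_above E w \<alpha> q \<alpha>' q y \<and>
       last \<alpha>' = last \<alpha> \<and> 0 < y)"
proof
  assume "has_reachable_good_cycle bt q0 E w"
  then obtain cs0 es0 cs es where r0: "run E cs0 es0" "hd cs0 = ([bt], q0)"
    and r: "run E cs es" "0 < path_weight w es" "is_local_min cs 0"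
      "snd (hd cs) = snd (last cs)" "stack_top (fst (hd cs)) = stack_top (fst (last cs))"
      "hd cs = last cs0"
    unfolding has_reachable_good_cycle_def good_cycle_def is_path_iff_run by blast
  obtain \<alpha> q where a: "last cs0 = (\<alpha>, q)" by fastforce
  obtain \<alpha>' where a': "last cs = (\<alpha>', q)" using r(4,6) a by (cases "last cs") auto
  have "run_above E w [bt] q0 \<alpha> q (path_weight w es0)"
    unfolding run_above_def using r0 a run_keeps_bottom[OF assms r0] by blast
  moreover have "run_above E w \<alpha> q \<alpha>' q (path_weight w es)"
    unfolding run_above_def using r a a' local_min_iff[OF run_nonempty[OF r(1)]] by auto
  moreover have "last \<alpha>' = last \<alpha>" using r(5,6) a a' by (simp add: stack_top_def)
  ultimately show "\<exists>\<alpha> q x \<alpha>' y. run_above E w [bt] q0 \<alpha> q x \<and> run_above E w \<alpha> q \<alpha>' q y \<and>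
       last \<alpha>' = last \<alpha> \<and> 0 < y"
    using r(2) by blast
next
  assume "\<exists>\<alpha> q x \<alpha>' y. run_above E w [bt] q0 \<alpha> q x \<and> run_above E w \<alpha> q \<alpha>' q y \<and>
       last \<alpha>' = last \<alpha> \<and> 0 < y"
  then obtain \<alpha> q \<alpha>' cs0 es0 cs es where r0: "run E cs0 es0" "hd cs0 = ([bt], q0)" "last cs0 = (\<alpha>, q)"
    and r: "run E cs es" "hd cs = (\<alpha>, q)" "last cs = (\<alpha>', q)" "\<forall>c\<in>set cs. prefix \<alpha> (fst c)"
      "0 < path_weight w es" "last \<alpha>' = last \<alpha>"
    unfolding run_above_def by blast
  have "good_cycle E w cs es"
    unfolding good_cycle_def is_path_iff_run
    using r local_min_iff[OF run_nonempty[OF r(1)]] by (simp add: stack_top_def)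
  then show "has_reachable_good_cycle bt q0 E w"
    unfolding has_reachable_good_cycle_def is_path_iff_run using r0 r(2) by metis
qed

text \<open>Soundness of the summary graph: projecting the two runs of a good cycle gives a
  walk to the cycle and a positive closed walk, which contains a positive simple cycle.\<close>
lemma good_cycle_yields_positive_simple_cycle:
  assumes "run_above E w [bt] q0 \<alpha> q x" "run_above E w \<alpha> q \<alpha>' q y"
    and "last \<alpha>' = last \<alpha>" "0 < y"
  shows "has_reachable_positive_simple_cycle bt q0 E w"
proof -
  let ?G = "summary_graph bt E w" and ?wt = "gweight bt E w"
  have "\<alpha> \<noteq> []" using run_above_prefix[OF assms(1)] by auto
  obtain gs0 where gs0: "set gs0 \<subseteq> ?G" "walk (q0, bt) gs0 (q, last \<alpha>)"
    using run_above_projects[OF assms(1)] by auto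
  obtain gs where gs: "set gs \<subseteq> ?G" "walk (q, last \<alpha>) gs (q, last \<alpha>)"
    "ereal (real_of_int y) \<le> sum_list (map ?wt gs)"
    using run_above_projects[OF assms(2) \<open>\<alpha> \<noteq> []\<close>] assms(3) by auto
  have "(0::ereal) < ereal (real_of_int y)" using assms(4) by simp
  then have "0 < sum_list (map ?wt gs)" using gs(3) by (rule less_le_trans)
  then obtain cyc where cyc: "cyc \<noteq> []" "set cyc \<subseteq> set gs"
    "walk (gsrc (hd cyc)) cyc (gsrc (hd cyc))" "distinct (map gsrc cyc)" "0 < sum_list (map ?wt cyc)"
    using positive_closed_walk_contains_simple[OF gs(2)] by blast
  have "((q0, bt), (q, last \<alpha>)) \<in> (graph_rel ?G)\<^sup>*" using walk_reachable[OF gs0(2,1)] by blast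
  also have "((q, last \<alpha>), gsrc (hd cyc)) \<in> (graph_rel ?G)\<^sup>*"
    using walk_reachable[OF gs(2,1)] cyc(1,2) hd_in_set by blast
  finally show ?thesis
    unfolding has_reachable_positive_simple_cycle_def simple_cycle_iff_walk positive_cycle_iff_sum
    using cyc gs(1) by blast
qed

text \<open>Completeness of the summary graph: realising the walk to a positive simple cycle
  and the cycle itself (with bound 1) gives the two runs of a good cycle.\<close>
lemma positive_simple_cycle_yields_good_cycle:
  assumes "has_reachable_positive_simple_cycle bt q0 E w"
  shows "\<exists>\<alpha> q x \<alpha>' y. run_above E w [bt] q0 \<alpha> q x \<and> run_above E w \<alpha> q \<alpha>' q y \<and>
           last \<alpha>' = last \<alpha> \<and> 0 < y"
proof -
  let ?G = "summary_graph bt E w" and ?wt = "gweight bt E w"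
  obtain cyc q \<gamma> where cyc: "set cyc \<subseteq> ?G" "walk (q, \<gamma>) cyc (q, \<gamma>)" "0 < sum_list (map ?wt cyc)"
    and reach: "((q0, bt), (q, \<gamma>)) \<in> (graph_rel ?G)\<^sup>*"
    using assms unfolding has_reachable_positive_simple_cycle_def simple_cycle_iff_walk
      positive_cycle_iff_sum by (metis surj_pair)
  obtain gs0 where gs0: "set gs0 \<subseteq> ?G" "walk (q0, bt) gs0 (q, \<gamma>)"
    using reachable_imp_walk[OF reach] by blast
  obtain \<alpha> x where \<alpha>: "run_above E w [bt] q0 \<alpha> q x" "last \<alpha> = \<gamma>"
    using walk_realised[OF gs0(2,1), where \<alpha>="[bt]" and N=0] by auto
  have "\<alpha> \<noteq> []" using run_above_prefix[OF \<alpha>(1)] by auto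
  obtain \<alpha>' y where y: "run_above E w \<alpha> q \<alpha>' q y" "last \<alpha>' = \<gamma>"
    "min (ereal (real_of_int 1)) (sum_list (map ?wt cyc)) \<le> ereal (real_of_int y)"
    using walk_realised[OF cyc(2,1) \<open>\<alpha> \<noteq> []\<close> \<alpha>(2)] by blast
  have "0 < min (ereal (real_of_int 1)) (sum_list (map ?wt cyc))" using cyc(3) by simp
  then have "(0::ereal) < ereal (real_of_int y)" using y(3) by (rule less_le_trans)
  then have "0 < y" by simp
  moreover have "last \<alpha>' = last \<alpha>" using y(2) \<alpha>(2) by simp
  ultimately show ?thesis using \<alpha>(1) y(1) by blast
qed

theorem lemma5:
  fixes bt :: "'g::finite" and q0 :: "'q::finite"
    and E :: "('q,'g) edge set" and w :: "('q,'g) edge \<Rightarrow> int"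
  assumes "wf_wps bt E"
  shows "has_reachable_good_cycle bt q0 E w \<longleftrightarrow> has_reachable_positive_simple_cycle bt q0 E w"
proof
  assume "has_reachable_good_cycle bt q0 E w"
  then obtain \<alpha> q x \<alpha>' y where "run_above E w [bt] q0 \<alpha> q x" "run_above E w \<alpha> q \<alpha>' q y"
    "last \<alpha>' = last \<alpha>" "0 < y"
    unfolding reachable_good_cycle_iff[OF assms] by blast
  then show "has_reachable_positive_simple_cycle bt q0 E w"
    by (rule good_cycle_yields_positive_simple_cycle)
next
  assume "has_reachable_positive_simple_cycle bt q0 E w"
  then show "has_reachable_good_cycle bt q0 E w"
    unfolding reachable_good_cycle_iff[OF assms] by (rule positive_simple_cycle_yields_good_cycle)
qed

end
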